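(* Let $i\in\{1,2\}$, let $(X,e_X,\mu_X)$ be an $\mathrm{NP}_i$-digital H-space, and let $(Y,e_Y)$ be a pointed digital image such that there are pointed continuous maps $f:(X,e_X)\to(Y,e_Y)$ and $g:(Y,e_Y)\to(X,e_X)$ with $g\circ f\simeq_i\mathrm{id}_X$ and $f\circ g\simeq_i\mathrm{id}_Y$. Define $\mu_Y=f\circ\mu_X\circ(g\times g):Y\times Y\to Y$. Then $(Y,e_Y,\mu_Y)$ is an $\mathrm{NP}_i$-digital H-space, and $(X,e_X,\mu_X)$ and $(Y,e_Y,\mu_Y)$ are H-equivalent (via $f$ and $g$).
   Context: A digital image is a finite set $X\subset\mathbb{Z}^n$ with a reflexive symmetric adjacency relation (a finite reflexive graph); continuous maps send adjacent points to adjacent points. On products, $\mathrm{NP}_u$ declares two tuples adjacent iff coordinates are adjacent in at most $u$ positions and equal elsewhere. An $\mathrm{NP}_i$-homotopy from $f$ to $g:X\to Y$ is an $\mathrm{NP}_i$-continuous $H:X\times[0,m]_{\mathbb{Z}}\to Y$ with $H(\cdot,0)=f$, $H(\cdot,m)=g$; write $f\simeq_i g$ (when $X$ is itself a product it carries the $\mathrm{NP}_i$ adjacency). $(f,g)(x)=(f(x),g(x))$, $(f\times g)(x,y)=(f(x),g(y))$; $c_e$ is the constant map at $e$. Pointed map: sends base point to base point. An $\mathrm{NP}_i$-digital H-space is $(X,e,\mu)$ with $\mu:X\times X\to X$ $\mathrm{NP}_i$-continuous, $\mu\circ(\mathrm{id}_X,c_e)\simeq_i\mathrm{id}_X$ and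 $\mu\circ(c_e,\mathrm{id}_X)\simeq_i\mathrm{id}_X$ (homotopies need not be pointed). Two $\mathrm{NP}_i$-digital H-spaces $(X,e_X,\mu_X)$, $(Y,e_Y,\mu_Y)$ are H-equivalent if there are continuous pointed maps $f:(X,e_X)\to(Y,e_Y)$, $g:(Y,e_Y)\to(X,e_X)$ with $f\circ g\simeq_i\mathrm{id}_Y$, $g\circ f\simeq_i\mathrm{id}_X$, $f\circ\mu_X\simeq_i\mu_Y\circ(f\times f)$ and $g\circ\mu_Y\simeq_i\mu_X\circ(g\times g)$. *)

theory Defs
  imports Main
begin

definition digital_image :: "'a set \<Rightarrow> ('a \<Rightarrow> 'a \<Rightarrow> bool) \<Rightarrow> bool" where
  "digital_image X adj \<longleftrightarrow> finite X \<and> (\<forall>x\<in>X. adj x x)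
     \<and> (\<forall>x\<in>X. \<forall>y\<in>X. adj x y \<longrightarrow> adj y x)"

definition dcontinuous :: "'a set \<Rightarrow> ('a \<Rightarrow> 'a \<Rightarrow> bool) \<Rightarrow> 'b set \<Rightarrow> ('b \<Rightarrow> 'b \<Rightarrow> bool)
    \<Rightarrow> ('a \<Rightarrow> 'b) \<Rightarrow> bool" where
  "dcontinuous X a Y b f \<longleftrightarrow> (\<forall>x\<in>X. f x \<in> Y)
     \<and> (\<forall>x\<in>X. \<forall>x'\<in>X. a x x' \<longrightarrow> b (f x) (f x'))"

definition NP_adj :: "nat \<Rightarrow> ('a \<Rightarrow> 'a \<Rightarrow> bool) \<Rightarrow> ('b \<Rightarrow> 'b \<Rightarrow> bool)
    \<Rightarrow> 'a \<times> 'b \<Rightarrow> 'a \<times> 'b \<Rightarrow> bool" where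
  "NP_adj u a b p q \<longleftrightarrow> (fst p = fst q \<or> a (fst p) (fst q)) \<and> (snd p = snd q \<or> b (snd p) (snd q))
     \<and> (if fst p = fst q then 0 else 1) + (if snd p = snd q then 0 else 1) \<le> (u::nat)"

definition int_adj :: "int \<Rightarrow> int \<Rightarrow> bool" where
  "int_adj s t \<longleftrightarrow> \<bar>s - t\<bar> \<le> 1"

definition NP_homotopic :: "nat \<Rightarrow> 'a set \<Rightarrow> ('a \<Rightarrow> 'a \<Rightarrow> bool) \<Rightarrow> 'b set \<Rightarrow> ('b \<Rightarrow> 'b \<Rightarrow> bool)
    \<Rightarrow> ('a \<Rightarrow> 'b) \<Rightarrow> ('a \<Rightarrow> 'b) \<Rightarrow> bool" where
  "NP_homotopic i X a Y b f g \<longleftrightarrow> (\<exists>m::int. m \<ge> 0 \<and> (\<exists>H.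
      dcontinuous (X \<times> {0..m}) (NP_adj i a int_adj) Y b H
      \<and> (\<forall>x\<in>X. H (x, 0) = f x) \<and> (\<forall>x\<in>X. H (x, m) = g x)))"

definition NP_H_space :: "nat \<Rightarrow> 'a set \<Rightarrow> ('a \<Rightarrow> 'a \<Rightarrow> bool) \<Rightarrow> 'a \<Rightarrow> ('a \<times> 'a \<Rightarrow> 'a) \<Rightarrow> bool" where
  "NP_H_space i X a e \<mu> \<longleftrightarrow> digital_image X a \<and> e \<in> X
     \<and> dcontinuous (X \<times> X) (NP_adj i a a) X a \<mu>
     \<and> NP_homotopic i X a X a (\<lambda>x. \<mu> (x, e)) id
     \<and> NP_homotopic i X a X a (\<lambda>x. \<mu> (e, x)) id"

definition H_equivalent_via :: "nat \<Rightarrow> 'a set \<Rightarrow> ('a \<Rightarrow> 'a \<Rightarrow> bool) \<Rightarrow> 'a \<Rightarrow> ('a \<times> 'a \<Rightarrow> 'a)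
    \<Rightarrow> 'b set \<Rightarrow> ('b \<Rightarrow> 'b \<Rightarrow> bool) \<Rightarrow> 'b \<Rightarrow> ('b \<times> 'b \<Rightarrow> 'b)
    \<Rightarrow> ('a \<Rightarrow> 'b) \<Rightarrow> ('b \<Rightarrow> 'a) \<Rightarrow> bool" where
  "H_equivalent_via i X a eX \<mu>X Y b eY \<mu>Y f g \<longleftrightarrow>
     dcontinuous X a Y b f \<and> f eX = eY \<and> dcontinuous Y b X a g \<and> g eY = eX
     \<and> NP_homotopic i Y b Y b (f \<circ> g) id \<and> NP_homotopic i X a X a (g \<circ> f) id
     \<and> NP_homotopic i (X \<times> X) (NP_adj i a a) Y b (f \<circ> \<mu>X) (\<mu>Y \<circ> map_prod f f)
     \<and> NP_homotopic i (Y \<times> Y) (NP_adj i b b) X a (g \<circ> \<mu>Y) (\<mu>X \<circ> map_prod g g)"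

end

theory Submission
  imports Defs
begin

text \<open>NP_i-homotopy is an equivalence relation compatible with composition by continuous
  maps, and a homotopy in one factor of a product is an NP_i-homotopy of the product map,
  because ((x, x'), t) \<mapsto> ((x, t), x') is NP_i-continuous. Transporting the unit homotopies
  of \<mu>X along f and g and using f \<circ> g \<simeq> id makes e_Y a homotopy unit for
  \<mu>Y = f \<circ> \<mu>X \<circ> (g \<times> g); replacing g \<circ> f by id in both factors of \<mu>X \<circ> ((g \<circ> f) \<times> (g \<circ> f)) gives
  the multiplicativity homotopies. The argument works for every i.\<close>

lemma dcontinuous_id: "dcontinuous X a X a id"
  by (auto simp: dcontinuous_def)

lemma dcontinuous_comp:
  "dcontinuous X a Y b f \<Longrightarrow> dcontinuous Y b Z c g \<Longrightarrow> dcontinuous X a Z c (g \<circ> f)"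
  by (auto simp: dcontinuous_def)

lemma dcontinuous_map_prod:
  assumes "dcontinuous X a X' a' f" "dcontinuous Y b Y' b' g"
  shows "dcontinuous (X \<times> Y) (NP_adj i a b) (X' \<times> Y') (NP_adj i a' b') (map_prod f g)"
  using assms unfolding dcontinuous_def NP_adj_def by (auto split: if_splits)

lemma dcontinuous_swap:
  "dcontinuous (X \<times> Y) (NP_adj i a b) (Y \<times> X) (NP_adj i b a) prod.swap"
  by (auto simp: dcontinuous_def NP_adj_def)

lemma dcontinuous_NP_reassoc:
  "dcontinuous ((X \<times> X') \<times> T) (NP_adj i (NP_adj i a a') c)
           ((X \<times> T) \<times> X') (NP_adj i (NP_adj i a c) a') (\<lambda>((x, x'), t). ((x, t), x'))"
  unfolding dcontinuous_def NP_adj_def by (auto split: if_splits)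

lemma NP_homotopic_cong:
  assumes "NP_homotopic i X a Y b p q"
    and "\<And>x. x \<in> X \<Longrightarrow> p x = p' x" and "\<And>x. x \<in> X \<Longrightarrow> q x = q' x"
  shows "NP_homotopic i X a Y b p' q'"
  using assms unfolding NP_homotopic_def by metis

lemma NP_homotopic_comp:
  assumes "NP_homotopic i X a Y b p q" "dcontinuous W c X a \<phi>" "dcontinuous Y b Z d \<psi>"
  shows "NP_homotopic i W c Z d (\<psi> \<circ> p \<circ> \<phi>) (\<psi> \<circ> q \<circ> \<phi>)"
proof -
  from assms(1) obtain m H where "m \<ge> 0"
    and H: "dcontinuous (X \<times> {0..m}) (NP_adj i a int_adj) Y b H"
    and "\<forall>x\<in>X. H (x, 0) = p x" "\<forall>x\<in>X. H (x, m) = q x"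
    unfolding NP_homotopic_def by blast
  moreover have "dcontinuous (W \<times> {0..m}) (NP_adj i c int_adj) Z d (\<psi> \<circ> H \<circ> map_prod \<phi> id)"
    using dcontinuous_comp[OF dcontinuous_comp[OF dcontinuous_map_prod[OF assms(2) dcontinuous_id] H]
        assms(3)]
    by (simp add: comp_assoc)
  moreover have "\<forall>x\<in>W. \<phi> x \<in> X"
    using assms(2) by (simp add: dcontinuous_def)
  ultimately show ?thesis
    unfolding NP_homotopic_def by (intro exI[of _ m] exI[of _ "\<psi> \<circ> H \<circ> map_prod \<phi> id"]) auto
qed

lemma NP_homotopic_sym:
  assumes "NP_homotopic i X a Y b p q"
  shows "NP_homotopic i X a Y b q p"
proof -
  from assms obtain m H where "m \<ge> 0"
    and H: "dcontinuous (X \<times> {0..m}) (NP_adj i a int_adj) Y b H"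
    and "\<forall>x\<in>X. H (x, 0) = p x" "\<forall>x\<in>X. H (x, m) = q x"
    unfolding NP_homotopic_def by blast
  moreover have "dcontinuous {0..m} int_adj {0..m} int_adj (\<lambda>t. m - t)"
    by (auto simp: dcontinuous_def int_adj_def)
  then have "dcontinuous (X \<times> {0..m}) (NP_adj i a int_adj) Y b (H \<circ> map_prod id (\<lambda>t. m - t))"
    using dcontinuous_comp[OF dcontinuous_map_prod[OF dcontinuous_id] H] by blast
  ultimately show ?thesis
    unfolding NP_homotopic_def by (intro exI[of _ m] exI[of _ "H \<circ> map_prod id (\<lambda>t. m - t)"]) auto
qed

text \<open>Concatenation: run the first homotopy on [0, m1] and the second, shifted, on [m1, m1 + m2].\<close>

lemma NP_homotopic_trans:
  assumes "NP_homotopic i X a Y b p q" "NP_homotopic i X a Y b q r"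
  shows "NP_homotopic i X a Y b p r"
proof -
  from assms(1) obtain m1 H1 where m1: "m1 \<ge> 0"
    and H1: "dcontinuous (X \<times> {0..m1}) (NP_adj i a int_adj) Y b H1"
      "\<forall>x\<in>X. H1 (x, 0) = p x" "\<forall>x\<in>X. H1 (x, m1) = q x"
    unfolding NP_homotopic_def by blast
  from assms(2) obtain m2 H2 where m2: "m2 \<ge> 0"
    and H2: "dcontinuous (X \<times> {0..m2}) (NP_adj i a int_adj) Y b H2"
      "\<forall>x\<in>X. H2 (x, 0) = q x" "\<forall>x\<in>X. H2 (x, m2) = r x"
    unfolding NP_homotopic_def by blast
  define H where "H = (\<lambda>(x, t). if t \<le> m1 then H1 (x, t) else H2 (x, t - m1))"
  have H_low: "H (x, t) = H1 (x, t)" if "t \<le> m1" for x t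
    using that by (simp add: H_def)
  have H_high: "H (x, t) = H2 (x, t - m1)" if "x \<in> X" "m1 \<le> t" for x t
    using that H1(3) H2(2) by (auto simp: H_def)
  have "dcontinuous (X \<times> {0..m1 + m2}) (NP_adj i a int_adj) Y b H"
    unfolding dcontinuous_def
  proof (intro conjI ballI impI)
    fix z assume "z \<in> X \<times> {0..m1 + m2}"
    then obtain x t where "z = (x, t)" "x \<in> X" "0 \<le> t" "t \<le> m1 + m2" by auto
    then show "H z \<in> Y"
      using H1(1) H2(1) H_low H_high[of x t] unfolding dcontinuous_def by (cases "t \<le> m1") auto
  next
    fix z z' assume "z \<in> X \<times> {0..m1 + m2}" "z' \<in> X \<times> {0..m1 + m2}"
      and adj: "NP_adj i a int_adj z z'"
    then obtain x t y s where z: "z = (x, t)" "z' = (y, s)" "x \<in> X" "y \<in> X"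
      "0 \<le> t" "t \<le> m1 + m2" "0 \<le> s" "s \<le> m1 + m2" by auto
    show "b (H z) (H z')"
    proof (cases "t \<le> m1 \<and> s \<le> m1")
      case True
      then show ?thesis using H1(1) z H_low adj unfolding dcontinuous_def by auto
    next
      case False
      with adj z have "m1 \<le> t" "m1 \<le> s"
        and "NP_adj i a int_adj (x, t - m1) (y, s - m1)"
        by (auto simp: NP_adj_def int_adj_def)
      then show ?thesis using H2(1) z H_high unfolding dcontinuous_def by auto
    qed
  qed
  moreover have "\<forall>x\<in>X. H (x, 0) = p x" "\<forall>x\<in>X. H (x, m1 + m2) = r x"
    using H1(2) H2(3) m1 m2 H_high[of _ "m1 + m2"] by (auto simp: H_def)
  ultimately show ?thesis
    unfolding NP_homotopic_def using m1 m2 by (intro exI[of _ "m1 + m2"] exI[of _ H]) auto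
qed

lemma NP_homotopic_map_prod_left:
  assumes "NP_homotopic i X a Y b p p'" "dcontinuous X' a' Y' b' q"
  shows "NP_homotopic i (X \<times> X') (NP_adj i a a') (Y \<times> Y') (NP_adj i b b')
           (map_prod p q) (map_prod p' q)"
proof -
  from assms(1) obtain m H where "m \<ge> 0"
    and H: "dcontinuous (X \<times> {0..m}) (NP_adj i a int_adj) Y b H"
    and "\<forall>x\<in>X. H (x, 0) = p x" "\<forall>x\<in>X. H (x, m) = p' x"
    unfolding NP_homotopic_def by blast
  moreover have "dcontinuous ((X \<times> X') \<times> {0..m}) (NP_adj i (NP_adj i a a') int_adj)
      (Y \<times> Y') (NP_adj i b b') (map_prod H q \<circ> (\<lambda>((x, x'), t). ((x, t), x')))"
    using dcontinuous_comp[OF dcontinuous_NP_reassoc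
        dcontinuous_map_prod[OF H assms(2)]] .
  ultimately show ?thesis
    unfolding NP_homotopic_def
    by (intro exI[of _ m] exI[of _ "map_prod H q \<circ> (\<lambda>((x, x'), t). ((x, t), x'))"]) auto
qed

lemma NP_homotopic_map_prod_right:
  assumes "NP_homotopic i X' a' Y' b' q q'" "dcontinuous X a Y b p"
  shows "NP_homotopic i (X \<times> X') (NP_adj i a a') (Y \<times> Y') (NP_adj i b b')
           (map_prod p q) (map_prod p q')"
  using NP_homotopic_comp[OF NP_homotopic_map_prod_left[OF assms] dcontinuous_swap dcontinuous_swap]
  by (rule NP_homotopic_cong) auto

lemma NP_homotopic_map_prod:
  assumes "NP_homotopic i X a Y b p p'" "NP_homotopic i X' a' Y' b' q q'"
    and "dcontinuous X a Y b p'" "dcontinuous X' a' Y' b' q"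
  shows "NP_homotopic i (X \<times> X') (NP_adj i a a') (Y \<times> Y') (NP_adj i b b')
           (map_prod p q) (map_prod p' q')"
  using NP_homotopic_map_prod_left[OF assms(1,4)] NP_homotopic_map_prod_right[OF assms(2,3)]
  by (rule NP_homotopic_trans)

lemma NP_H_space_transfer:
  assumes "NP_H_space i X a eX \<mu>" "digital_image Y b" "eY \<in> Y"
    and f: "dcontinuous X a Y b f" and g: "dcontinuous Y b X a g" and "g eY = eX"
    and fg: "NP_homotopic i Y b Y b (f \<circ> g) id"
  shows "NP_H_space i Y b eY (f \<circ> \<mu> \<circ> map_prod g g)"
proof -
  have \<mu>: "dcontinuous (X \<times> X) (NP_adj i a a) X a \<mu>"
    and right_unit: "NP_homotopic i X a X a (\<lambda>x. \<mu> (x, eX)) id"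
    and left_unit: "NP_homotopic i X a X a (\<lambda>x. \<mu> (eX, x)) id"
    using assms(1) unfolding NP_H_space_def by auto
  have "dcontinuous (Y \<times> Y) (NP_adj i b b) Y b (f \<circ> \<mu> \<circ> map_prod g g)"
    using dcontinuous_comp[OF dcontinuous_map_prod[OF g g] dcontinuous_comp[OF \<mu> f]]
    by (simp add: comp_assoc)
  moreover have "NP_homotopic i Y b Y b (\<lambda>y. (f \<circ> \<mu> \<circ> map_prod g g) (y, eY)) id"
    using NP_homotopic_comp[OF right_unit g f] \<open>g eY = eX\<close>
    by (intro NP_homotopic_trans[OF _ fg]) (auto elim: NP_homotopic_cong)
  moreover have "NP_homotopic i Y b Y b (\<lambda>y. (f \<circ> \<mu> \<circ> map_prod g g) (eY, y)) id"
    using NP_homotopic_comp[OF left_unit g f] \<open>g eY = eX\<close>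
    by (intro NP_homotopic_trans[OF _ fg]) (auto elim: NP_homotopic_cong)
  ultimately show ?thesis
    using assms(2,3) unfolding NP_H_space_def by blast
qed

theorem mainTheorem3:
  fixes X :: "'a set" and a :: "'a \<Rightarrow> 'a \<Rightarrow> bool" and eX :: 'a and \<mu>X :: "'a \<times> 'a \<Rightarrow> 'a"
    and Y :: "'b set" and b :: "'b \<Rightarrow> 'b \<Rightarrow> bool" and eY :: 'b
    and f :: "'a \<Rightarrow> 'b" and g :: "'b \<Rightarrow> 'a" and i :: nat
  assumes "i \<in> {1, 2}"
    and "NP_H_space i X a eX \<mu>X"
    and "digital_image Y b" and "eY \<in> Y"
    and "dcontinuous X a Y b f" and "f eX = eY"
    and "dcontinuous Y b X a g" and "g eY = eX"
    and "NP_homotopic i X a X a (g \<circ> f) id"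
    and "NP_homotopic i Y b Y b (f \<circ> g) id"
  shows "NP_H_space i Y b eY (f \<circ> \<mu>X \<circ> map_prod g g)
       \<and> H_equivalent_via i X a eX \<mu>X Y b eY (f \<circ> \<mu>X \<circ> map_prod g g) f g"
proof -
  note f = assms(5) and g = assms(7) and gf = assms(9)
  have \<mu>X: "dcontinuous (X \<times> X) (NP_adj i a a) X a \<mu>X"
    using assms(2) by (simp add: NP_H_space_def)
  have \<mu>X_gf: "NP_homotopic i (X \<times> X) (NP_adj i a a) X a (\<mu>X \<circ> map_prod (g \<circ> f) (g \<circ> f)) \<mu>X"
    using NP_homotopic_comp[OF NP_homotopic_map_prod[OF gf gf dcontinuous_id
          dcontinuous_comp[OF f g]] dcontinuous_id \<mu>X]
    by (auto elim: NP_homotopic_cong)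
  have "NP_homotopic i (X \<times> X) (NP_adj i a a) Y b
      (f \<circ> \<mu>X) ((f \<circ> \<mu>X \<circ> map_prod g g) \<circ> map_prod f f)"
    using NP_homotopic_comp[OF NP_homotopic_sym dcontinuous_id f, OF \<mu>X_gf]
    by (rule NP_homotopic_cong) (simp_all add: map_prod_def split_beta)
  moreover have "NP_homotopic i (Y \<times> Y) (NP_adj i b b) X a
      (g \<circ> (f \<circ> \<mu>X \<circ> map_prod g g)) (\<mu>X \<circ> map_prod g g)"
    using NP_homotopic_comp[OF gf dcontinuous_comp[OF dcontinuous_map_prod[OF g g] \<mu>X]
        dcontinuous_id]
    by (auto elim: NP_homotopic_cong)
  ultimately show ?thesis
    using assms NP_H_space_transfer[OF assms(2-4) f g assms(8,10)]
    unfolding H_equivalent_via_def by auto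
qed

end
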